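(* Let $G$ be any graph and let $vw$ be an edge of $G$ that belongs to two different bicliques of $G$. Then, after possibly interchanging the names of $v$ and $w$, at least one of the following holds: (a) there exist vertices $v_1,w_1$ such that $v v_1$ and $w w_1$ are edges, while $v w_1$, $w v_1$ and $v_1 w_1$ are non-edges; or (b) there exist vertices $v_1,v_2$ such that $v v_1$, $v v_2$ and $v_1v_2$ are edges, while $w v_1$ and $w v_2$ are non-edges.
   Context: All graphs are finite, simple and undirected. A biclique of a graph $G$ is a maximal (with respect to inclusion) induced subgraph of $G$ that is a complete bipartite graph $K_{p,q}$ with $p,q\ge 1$. *)

theory Defs
  imports Main
begin

definition simple_graph :: "'a set \<Rightarrow> ('a \<Rightarrow> 'a \<Rightarrow> bool) \<Rightarrow> bool" where
  "simple_graph V E \<longleftrightarrow> finite V \<and> (\<forall>x y. E x y \<longrightarrow> x \<in> V \<and> y \<in> V)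
     \<and> (\<forall>x y. E x y \<longrightarrow> E y x) \<and> (\<forall>x. \<not> E x x)"

definition induces_complete_bipartite :: "'a set \<Rightarrow> ('a \<Rightarrow> 'a \<Rightarrow> bool) \<Rightarrow> 'a set \<Rightarrow> bool" where
  "induces_complete_bipartite V E S \<longleftrightarrow> S \<subseteq> V \<and>
     (\<exists>A B. S = A \<union> B \<and> A \<inter> B = {} \<and> A \<noteq> {} \<and> B \<noteq> {} \<and>
        (\<forall>x\<in>A. \<forall>y\<in>A. \<not> E x y) \<and> (\<forall>x\<in>B. \<forall>y\<in>B. \<not> E x y) \<and>
        (\<forall>x\<in>A. \<forall>y\<in>B. E x y))"

definition biclique :: "'a set \<Rightarrow> ('a \<Rightarrow> 'a \<Rightarrow> bool) \<Rightarrow> 'a set \<Rightarrow> bool" where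
  "biclique V E S \<longleftrightarrow> induces_complete_bipartite V E S \<and>
     (\<forall>T. S \<subset> T \<longrightarrow> \<not> induces_complete_bipartite V E T)"

end

theory Submission
  imports Defs
begin

text \<open>Every biclique through the edge \<open>vw\<close> is contained in the set of vertices adjacent to
  exactly one of \<open>v\<close> and \<open>w\<close>: its two sides are the vertices seeing only \<open>w\<close> and those seeing
  only \<open>v\<close>. If neither (a) nor (b) occurs, in either orientation, this set itself induces a
  complete bipartite graph (the absence of (b) makes both parts independent, the absence of
  (a) joins them completely), so by maximality every biclique through \<open>vw\<close> equals it and
  there is only one.\<close>

definition exclusive_neighbours :: "('a \<Rightarrow> 'a \<Rightarrow> bool) \<Rightarrow> 'a \<Rightarrow> 'a \<Rightarrow> 'a set" where
  "exclusive_neighbours E v w = {x. E v x \<and> \<not> E w x}"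

lemma complete_bipartite_subset_exclusive_neighbours:
  assumes "\<And>x y. E x y \<Longrightarrow> E y x"
    and "\<forall>x\<in>A. \<forall>y\<in>A. \<not> E x y" and "\<forall>x\<in>B. \<forall>y\<in>B. \<not> E x y"
    and "\<forall>x\<in>A. \<forall>y\<in>B. E x y"
    and "v \<in> A" and "w \<in> B"
  shows "A \<union> B \<subseteq> exclusive_neighbours E v w \<union> exclusive_neighbours E w v"
  using assms unfolding exclusive_neighbours_def by blast

lemma induces_complete_bipartite_subset_exclusive_neighbours:
  assumes sym: "\<And>x y. E x y \<Longrightarrow> E y x"
    and S: "induces_complete_bipartite V E S" and vw: "E v w" and vwS: "{v, w} \<subseteq> S"
  shows "S \<subseteq> exclusive_neighbours E v w \<union> exclusive_neighbours E w v"
proof -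
  obtain A B where AB: "S = A \<union> B"
    and indep_A: "\<forall>x\<in>A. \<forall>y\<in>A. \<not> E x y" and indep_B: "\<forall>x\<in>B. \<forall>y\<in>B. \<not> E x y"
    and join: "\<forall>x\<in>A. \<forall>y\<in>B. E x y"
    using S unfolding induces_complete_bipartite_def by blast
  have join': "\<forall>x\<in>B. \<forall>y\<in>A. E x y" using join sym by blast
  consider "v \<in> A" "w \<in> B" | "v \<in> B" "w \<in> A"
    using vwS vw indep_A indep_B AB by blast
  then show ?thesis
  proof cases
    case 1
    with complete_bipartite_subset_exclusive_neighbours[OF sym indep_A indep_B join]
    show ?thesis using AB by blast
  next
    case 2
    with complete_bipartite_subset_exclusive_neighbours[OF sym indep_B indep_A join']
    show ?thesis using AB by blast
  qed
qed

lemma exclusive_neighbours_induce_complete_bipartite: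
  assumes G: "simple_graph V E" and vw: "E v w"
    and no_a: "\<And>x1 y1. E v x1 \<Longrightarrow> E w y1 \<Longrightarrow> \<not> E v y1 \<Longrightarrow> \<not> E w x1 \<Longrightarrow> E x1 y1"
    and no_b_v: "\<And>x1 x2. E v x1 \<Longrightarrow> E v x2 \<Longrightarrow> \<not> E w x1 \<Longrightarrow> \<not> E w x2 \<Longrightarrow> \<not> E x1 x2"
    and no_b_w: "\<And>x1 x2. E w x1 \<Longrightarrow> E w x2 \<Longrightarrow> \<not> E v x1 \<Longrightarrow> \<not> E v x2 \<Longrightarrow> \<not> E x1 x2"
  shows "induces_complete_bipartite V E (exclusive_neighbours E v w \<union> exclusive_neighbours E w v)"
proof -
  let ?A = "exclusive_neighbours E v w" and ?B = "exclusive_neighbours E w v"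
  have sym: "\<And>x y. E x y \<Longrightarrow> E y x" and irrefl: "\<And>x. \<not> E x x"
    and in_V: "\<And>x y. E x y \<Longrightarrow> x \<in> V \<and> y \<in> V"
    using G unfolding simple_graph_def by blast+
  have "w \<in> ?A" and "v \<in> ?B"
    using vw sym irrefl unfolding exclusive_neighbours_def by blast+
  moreover have "?A \<union> ?B \<subseteq> V" and "?A \<inter> ?B = {}"
    using in_V unfolding exclusive_neighbours_def by blast+
  moreover have "\<forall>x\<in>?A. \<forall>y\<in>?A. \<not> E x y" and "\<forall>x\<in>?B. \<forall>y\<in>?B. \<not> E x y"
    using no_b_v no_b_w unfolding exclusive_neighbours_def by blast+
  moreover have "\<forall>x\<in>?A. \<forall>y\<in>?B. E x y"
    using no_a unfolding exclusive_neighbours_def by blast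
  ultimately show ?thesis
    unfolding induces_complete_bipartite_def by (intro conjI exI[of _ ?A] exI[of _ ?B]) auto
qed

lemma biclique_through_edge_eq_exclusive_neighbours:
  assumes G: "simple_graph V E" and vw: "E v w"
    and no_a: "\<And>x1 y1. E v x1 \<Longrightarrow> E w y1 \<Longrightarrow> \<not> E v y1 \<Longrightarrow> \<not> E w x1 \<Longrightarrow> E x1 y1"
    and no_b_v: "\<And>x1 x2. E v x1 \<Longrightarrow> E v x2 \<Longrightarrow> \<not> E w x1 \<Longrightarrow> \<not> E w x2 \<Longrightarrow> \<not> E x1 x2"
    and no_b_w: "\<And>x1 x2. E w x1 \<Longrightarrow> E w x2 \<Longrightarrow> \<not> E v x1 \<Longrightarrow> \<not> E v x2 \<Longrightarrow> \<not> E x1 x2"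
    and S: "biclique V E S" and vwS: "{v, w} \<subseteq> S"
  shows "S = exclusive_neighbours E v w \<union> exclusive_neighbours E w v"
proof -
  have sym: "\<And>x y. E x y \<Longrightarrow> E y x" using G unfolding simple_graph_def by blast
  have S_induces: "induces_complete_bipartite V E S"
    and S_maximal: "\<And>T. S \<subset> T \<Longrightarrow> \<not> induces_complete_bipartite V E T"
    using S unfolding biclique_def by blast+
  have "S \<subseteq> exclusive_neighbours E v w \<union> exclusive_neighbours E w v"
    by (rule induces_complete_bipartite_subset_exclusive_neighbours[OF sym S_induces vw vwS])
  moreover have "induces_complete_bipartite V E
      (exclusive_neighbours E v w \<union> exclusive_neighbours E w v)"
    by (rule exclusive_neighbours_induce_complete_bipartite[OF G vw no_a no_b_v no_b_w])
  ultimately show ?thesis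
    using S_maximal by blast
qed

theorem claim1:
  fixes V :: "'a set" and E :: "'a \<Rightarrow> 'a \<Rightarrow> bool" and v w :: 'a
  assumes "simple_graph V E"
    and "E v w"
    and "biclique V E S1" and "biclique V E S2" and "S1 \<noteq> S2"
    and "{v, w} \<subseteq> S1" and "{v, w} \<subseteq> S2"
  shows "\<exists>x y. {x, y} = {v, w} \<and>
           ((\<exists>x1 y1. E x x1 \<and> E y y1 \<and> \<not> E x y1 \<and> \<not> E y x1 \<and> \<not> E x1 y1) \<or>
            (\<exists>x1 x2. E x x1 \<and> E x x2 \<and> E x1 x2 \<and> \<not> E y x1 \<and> \<not> E y x2))"
proof (rule ccontr)
  assume "\<not> ?thesis"
  note no_config = this[unfolded not_ex de_Morgan_conj, rule_format]
  have no_a: "\<And>x1 y1. E v x1 \<Longrightarrow> E w y1 \<Longrightarrow> \<not> E v y1 \<Longrightarrow> \<not> E w x1 \<Longrightarrow> E x1 y1"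
    and no_b_v: "\<And>x1 x2. E v x1 \<Longrightarrow> E v x2 \<Longrightarrow> \<not> E w x1 \<Longrightarrow> \<not> E w x2 \<Longrightarrow> \<not> E x1 x2"
    using no_config[of v w] by auto
  have no_b_w: "\<And>x1 x2. E w x1 \<Longrightarrow> E w x2 \<Longrightarrow> \<not> E v x1 \<Longrightarrow> \<not> E v x2 \<Longrightarrow> \<not> E x1 x2"
    using no_config[of w v] by (auto simp: insert_commute)
  have "S1 = exclusive_neighbours E v w \<union> exclusive_neighbours E w v"
    by (rule biclique_through_edge_eq_exclusive_neighbours) (fact assms no_a no_b_v no_b_w)+
  moreover have "S2 = exclusive_neighbours E v w \<union> exclusive_neighbours E w v"
    by (rule biclique_through_edge_eq_exclusive_neighbours) (fact assms no_a no_b_v no_b_w)+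
  ultimately have "S1 = S2" by simp
  with \<open>S1 \<noteq> S2\<close> show False ..
qed

end
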